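(* Let $p$ be a prime and $d$ a power of $p$. If $n_0+n_1d=m_0+m_1d$ for integers $0\le n_0<d$ and $n_1,m_0,m_1\ge0$, then $$v_p\!\left(\frac{m_0!\,m_1!}{n_0!\,n_1!}\right)\le (n_1-m_1)\,v_p(d!).$$
   Context: $v_p$ denotes the $p$-adic valuation on $\mathbb{Q}$. *)

theory Defs
  imports "HOL-Computational_Algebra.Computational_Algebra"
begin

text \<open>p-adic valuation on the rationals: for x = a/b in lowest terms (b > 0),
  v_p(x) = v_p(a) - v_p(b). (Value at 0 is irrelevant here; it is 0.)\<close>
definition padic_val_rat :: "nat \<Rightarrow> rat \<Rightarrow> int" where
  "padic_val_rat p x =
     (case quotient_of x of (a, b) \<Rightarrow>
        int (multiplicity (int p) a) - int (multiplicity (int p) b))"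

end

theory Submission
  imports Defs
begin

text \<open>
  Write \<open>n\<^sub>1 = t + m\<^sub>1\<close>, so that \<open>m\<^sub>0 = t d + n\<^sub>0\<close>. Since \<open>d = p\<^sup>k\<close> and \<open>n\<^sub>0 < d\<close>,
  the numbers \<open>t d + 1, \<dots>, t d + n\<^sub>0\<close> have the same \<open>p\<close>-adic valuations as \<open>1, \<dots>, n\<^sub>0\<close>,
  and the multiples \<open>i d\<close> contribute \<open>v\<^sub>p(i) + k\<close> each; this gives
  \<open>v\<^sub>p(m\<^sub>0!) = t v\<^sub>p(d!) + v\<^sub>p(t!) + v\<^sub>p(n\<^sub>0!)\<close>. The claim then reduces to
  \<open>v\<^sub>p(t!) + v\<^sub>p(m\<^sub>1!) \<le> v\<^sub>p((t + m\<^sub>1)!)\<close>, the integrality of a binomial coefficient.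
\<close>

lemma padic_val_rat_of_int_div:
  fixes a b :: int
  assumes "prime p" "a \<noteq> 0" "b \<noteq> 0"
  shows "padic_val_rat p (of_int a / of_int b)
           = int (multiplicity (int p) a) - int (multiplicity (int p) b)"
proof -
  obtain a' b' where q: "quotient_of (of_int a / of_int b) = (a', b')"
    by (cases "quotient_of (of_int a / of_int b)") auto
  have "b' > 0" using quotient_of_denom_pos[OF q] .
  have "(of_int a / of_int b :: rat) = of_int a' / of_int b'"
    using quotient_of_div[OF q] .
  with \<open>b \<noteq> 0\<close> \<open>b' > 0\<close> have "(of_int (a * b') :: rat) = of_int (a' * b)"
    by (simp add: field_simps)
  hence cross: "a * b' = a' * b" by linarith
  with assms \<open>b' > 0\<close> have "a' \<noteq> 0" by auto
  have "multiplicity (int p) (a * b') = multiplicity (int p) (a' * b)"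
    using cross by simp
  with assms \<open>b' > 0\<close> \<open>a' \<noteq> 0\<close>
  have "multiplicity (int p) a + multiplicity (int p) b'
          = multiplicity (int p) a' + multiplicity (int p) b"
    by (simp add: prime_elem_multiplicity_mult_distrib)
  thus ?thesis unfolding padic_val_rat_def q by simp
qed

context
  fixes p :: nat
  assumes prime: "prime p"
begin

private lemma prime_elem_int: "prime_elem (int p)"
  using prime by simp

abbreviation (input) fact_multiplicity :: "nat \<Rightarrow> nat" where
  "fact_multiplicity n \<equiv> multiplicity (int p) (fact n :: int)"

lemma multiplicity_fact_Suc:
  "fact_multiplicity (Suc n) = fact_multiplicity n + multiplicity (int p) (int (Suc n))"
proof -
  have "(fact (Suc n) :: int) = fact n * int (Suc n)"
    by (simp add: algebra_simps)
  thus ?thesis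
    by (simp add: prime_elem_multiplicity_mult_distrib[OF prime_elem_int])
qed

lemma multiplicity_fact_add_le:
  "fact_multiplicity a + fact_multiplicity b \<le> fact_multiplicity (a + b)"
proof -
  have "multiplicity (int p) (fact a * fact b :: int) \<le> fact_multiplicity (a + b)"
    by (rule dvd_imp_multiplicity_le[OF fact_fact_dvd_fact]) simp
  thus ?thesis
    by (simp add: prime_elem_multiplicity_mult_distrib[OF prime_elem_int])
qed

lemma multiplicity_add_prime_power_multiple:
  assumes "0 < r" "r < p ^ k"
  shows "multiplicity (int p) (int (m * p ^ k + r)) = multiplicity (int p) (int r)"
proof -
  let ?j = "multiplicity (int p) (int r)"
  have "p ^ ?j dvd r"
    by (metis multiplicity_dvd of_nat_dvd_iff of_nat_power)
  then have "p ^ ?j < p ^ k"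
    using assms by (meson dvd_imp_le order.strict_trans1)
  then have "?j < k"
    using prime power_less_imp_less_exp prime_gt_1_nat by blast
  then have "int p ^ Suc ?j dvd int (m * p ^ k)" "int p ^ ?j dvd int (m * p ^ k)"
    unfolding of_nat_mult of_nat_power by (intro dvd_mult le_imp_power_dvd; simp)+
  moreover have "\<not> int p ^ Suc ?j dvd int r"
    using assms(1) prime_elem_not_unit[OF prime_elem_int]
          power_dvd_iff_le_multiplicity[of "int r" "int p" "Suc ?j"] by simp
  ultimately show ?thesis
    by (intro multiplicity_eqI) (simp_all add: dvd_add_right_iff multiplicity_dvd)
qed

lemma multiplicity_fact_add_prime_power_multiple:
  assumes "r < p ^ k"
  shows "fact_multiplicity (m * p ^ k + r) = fact_multiplicity (m * p ^ k) + fact_multiplicity r"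
  using assms
proof (induction r)
  case 0
  then show ?case by simp
next
  case (Suc r)
  then show ?case
    using multiplicity_fact_Suc[of "m * p ^ k + r"] multiplicity_fact_Suc[of r]
          multiplicity_add_prime_power_multiple[of "Suc r" k m]
    by simp
qed

lemma multiplicity_fact_prime_power_multiple:
  "fact_multiplicity (a * p ^ k) = a * fact_multiplicity (p ^ k) + fact_multiplicity a"
proof (induction a)
  case 0
  then show ?case by simp
next
  case (Suc a)
  have "p ^ k > 0"
    using prime by (simp add: prime_gt_0_nat)
  then obtain r where r: "p ^ k = Suc r"
    using gr0_implies_Suc by blast
  have "Suc (a * p ^ k + r) = Suc a * p ^ k"
    using r by simp
  then have "fact_multiplicity (Suc a * p ^ k)
               = fact_multiplicity (a * p ^ k + r) + multiplicity (int p) (int (Suc a * p ^ k))"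
    using multiplicity_fact_Suc[of "a * p ^ k + r"] by (simp only:)
  moreover have "fact_multiplicity (a * p ^ k + r)
                   = fact_multiplicity (a * p ^ k) + fact_multiplicity r"
    using multiplicity_fact_add_prime_power_multiple[of r k a] r by simp
  moreover have "multiplicity (int p) (int (Suc a * p ^ k))
                   = multiplicity (int p) (int (Suc a)) + k"
    unfolding of_nat_mult of_nat_power
    using prime by (simp add: prime_elem_multiplicity_mult_distrib[OF prime_elem_int])
  moreover have "fact_multiplicity (p ^ k)
                   = fact_multiplicity r + multiplicity (int p) (int (p ^ k))"
    using multiplicity_fact_Suc[of r, folded r] .
  then have "fact_multiplicity (p ^ k) = fact_multiplicity r + k"
    using prime_elem_int by simp
  ultimately show ?case
    using Suc.IH multiplicity_fact_Suc[of a] by simp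
qed

end

theorem lemma2p3:
  fixes p d k n0 n1 m0 m1 :: nat
  assumes "prime p"
    and "d = p ^ k"
    and "n0 < d"
    and "n0 + n1 * d = m0 + m1 * d"
  shows "padic_val_rat p (of_nat (fact m0 * fact m1) / of_nat (fact n0 * fact n1))
           \<le> (int n1 - int m1) * padic_val_rat p (of_nat (fact d))"
proof -
  let ?V = "\<lambda>n. multiplicity (int p) (fact n :: int)"
  have "m1 * d < Suc n1 * d"
    using assms(3,4) by simp
  then obtain t where n1: "n1 = t + m1"
    by (metis le_iff_add less_Suc_eq_le mult_less_cancel2 add.commute)
  with assms(4) have m0: "m0 = t * p ^ k + n0"
    by (simp add: assms(2) algebra_simps)
  have "?V m0 = t * ?V d + ?V t + ?V n0"
    using assms(1-3) multiplicity_fact_add_prime_power_multiple[of p n0 k t]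
          multiplicity_fact_prime_power_multiple[of p t k] by (simp add: m0)
  moreover have "?V t + ?V m1 \<le> ?V n1"
    using multiplicity_fact_add_le[OF assms(1)] n1 by simp
  moreover have "padic_val_rat p (of_nat (fact m0 * fact m1) / of_nat (fact n0 * fact n1))
                   = int (?V m0) + int (?V m1) - int (?V n0) - int (?V n1)"
    using padic_val_rat_of_int_div[OF assms(1), of "fact m0 * fact m1" "fact n0 * fact n1"]
          assms(1) by (simp add: prime_elem_multiplicity_mult_distrib)
  moreover have "padic_val_rat p (of_nat (fact d)) = int (?V d)"
    using padic_val_rat_of_int_div[OF assms(1), of "fact d" 1] by simp
  ultimately show ?thesis
    by (simp add: n1 algebra_simps)
qed

end
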